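(* Let $L$ be as in the context, $P$ a cell of $\Lambda(L)$, and $f$ an automorphism of $L$ with $f(P)=P$ which is $P$-direct (so $f$ is induced by a symmetry of the Coxeter graph of $P$). Suppose $v\in\Phi^b$ is a $2$-root (a vertex of the Coxeter graph with $v^2=2$) with $f(v)=v$, let $L_v=\{x\in L: xv=0\}$ and let $f_v$ be the restriction of $f$ to $L_v$. If $f$ is $\mathbb{Z}/3$-reversing, then $f_v$ is $\mathbb{Z}/3$-reversing, and $f_v$ preserves and is $P_v$-direct for some cell $P_v$ of $\Lambda(L_v)$.
   Context: Lattices considered: integral lattices $L$ of signature $(n,1)$ with discriminant group $L^*/L\cong\mathbb{Z}/3\oplus D$, $D$ $2$-periodic; for such $L$, $V_k=\{v\in L:v^2=k,\ 2vw/v^2\in\mathbb{Z}\ \forall w\in L\}$ ($k=2,6$), $\Phi=V_2\cup V_6$, assumed of full rank. $\Lambda(L)=\{x\in L\otimes\mathbb{R}:x^2<0\}/\mathbb{R}^*$, $\Lambda^\sharp(L)=\{x: x^2<0\}/\mathbb{R}_{>0}$; cells of $\Lambda(L)$ are closures of components of the complement of the hyperplanes $v^\perp$, $v\in\Phi$ (the same definitions apply to $L_v$ with its own $V_2,V_6$). A cell $P$ lifts to two opposite pieces $\pm P^\sharp$ in $\Lambda^\sharp$; an automorphism $g$ with $g(P)=P$ is $P$-direct if $g(P^\sharp)=P^\sharp$ and $P$-reversing otherwise. $\Phi^b$ is the set of roots $v\in\Phi$, pairing negatively with an interior point of $P^\sharp$, whose hyperplanes $v^\perp$ support the walls of $P$.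 $g$ is $\mathbb{Z}/3$-direct if it acts trivially on the $3$-primary part of $L^*/L$, and $\mathbb{Z}/3$-reversing otherwise. *)

theory Defs
  imports "HOL-Analysis.Analysis"
begin

text \<open>Ambient space: real^'n with a symmetric bilinear form given by a matrix Q.
  A lattice is a subset L of the ambient space; its real span plays the role of L tensor R.\<close>

definition bf :: "real^'n^'n \<Rightarrow> real^'n \<Rightarrow> real^'n \<Rightarrow> real" where
  "bf Q x y = x \<bullet> (Q *v y)"

definition is_lattice :: "(real^'n) set \<Rightarrow> bool" where
  "is_lattice L \<longleftrightarrow> (\<exists>B. finite B \<and> independent B \<and>
      L = {\<Sum>b\<in>B. real_of_int (c b) *\<^sub>R b | c. True})"

definition integral_form :: "real^'n^'n \<Rightarrow> (real^'n) set \<Rightarrow> bool" where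
  "integral_form Q L \<longleftrightarrow> (\<forall>x\<in>L. \<forall>y\<in>L. bf Q x y \<in> \<int>)"

text \<open>Signature (n,1) on the subspace W: some negative vector whose orthogonal
  complement in W is positive definite.\<close>
definition lorentzian :: "real^'n^'n \<Rightarrow> (real^'n) set \<Rightarrow> bool" where
  "lorentzian Q W \<longleftrightarrow> (\<exists>e\<in>W. bf Q e e < 0 \<and>
      (\<forall>x\<in>W. x \<noteq> 0 \<and> bf Q x e = 0 \<longrightarrow> bf Q x x > 0))"

definition dual_lattice :: "real^'n^'n \<Rightarrow> (real^'n) set \<Rightarrow> (real^'n) set" where
  "dual_lattice Q L = {x \<in> span L. \<forall>w\<in>L. bf Q x w \<in> \<int>}"

text \<open>L*/L is isomorphic to Z/3 (+) D with 2D = 0: it is the internal direct sum of a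
  cyclic subgroup of order 3 (generated by z mod L) and its 2-torsion subgroup.\<close>
definition disc_Z3_plus_2periodic :: "real^'n^'n \<Rightarrow> (real^'n) set \<Rightarrow> bool" where
  "disc_Z3_plus_2periodic Q L \<longleftrightarrow>
    (\<exists>z\<in>dual_lattice Q L. z \<notin> L \<and> 3 *\<^sub>R z \<in> L \<and>
       (\<forall>y\<in>dual_lattice Q L. \<exists>k::int. \<exists>d\<in>dual_lattice Q L.
           2 *\<^sub>R d \<in> L \<and> y - real_of_int k *\<^sub>R z - d \<in> L) \<and>
       (\<forall>k::int. \<forall>d\<in>dual_lattice Q L.
           2 *\<^sub>R d \<in> L \<and> real_of_int k *\<^sub>R z - d \<in> L \<longrightarrow> real_of_int k *\<^sub>R z \<in> L))"

definition V_roots :: "real^'n^'n \<Rightarrow> (real^'n) set \<Rightarrow> real \<Rightarrow> (real^'n) set" where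
  "V_roots Q L k = {v \<in> L. bf Q v v = k \<and> (\<forall>w\<in>L. 2 * bf Q v w / bf Q v v \<in> \<int>)}"

definition Phi :: "real^'n^'n \<Rightarrow> (real^'n) set \<Rightarrow> (real^'n) set" where
  "Phi Q L = V_roots Q L 2 \<union> V_roots Q L 6"

text \<open>Standing assumptions on L (the lattice "as in the context"); L has full rank in the ambient space.\<close>
definition good_lattice :: "real^'n^'n \<Rightarrow> (real^'n) set \<Rightarrow> bool" where
  "good_lattice Q L \<longleftrightarrow> transpose Q = Q \<and> is_lattice L \<and> span L = UNIV \<and>
     integral_form Q L \<and> lorentzian Q (span L) \<and> disc_Z3_plus_2periodic Q L \<and>
     span (Phi Q L) = span L"

definition automorphism :: "real^'n^'n \<Rightarrow> (real^'n) set \<Rightarrow> (real^'n \<Rightarrow> real^'n) \<Rightarrow> bool" where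
  "automorphism Q L f \<longleftrightarrow> linear f \<and> f ` L = L \<and>
     (\<forall>x\<in>L. \<forall>y\<in>L. bf Q (f x) (f y) = bf Q x y)"

text \<open>Negative cone in L tensor R (Lambda^sharp is its quotient by positive scalars,
  Lambda its quotient by nonzero scalars).\<close>
definition neg_cone :: "real^'n^'n \<Rightarrow> (real^'n) set \<Rightarrow> (real^'n) set" where
  "neg_cone Q L = {x \<in> span L. bf Q x x < 0}"

definition open_chambers :: "real^'n^'n \<Rightarrow> (real^'n) set \<Rightarrow> (real^'n) set" where
  "open_chambers Q L = {x \<in> neg_cone Q L. \<forall>v\<in>Phi Q L. bf Q v x \<noteq> 0}"

text \<open>Lift P^sharp of a cell: closure (inside the negative cone) of a connected component K of
  the complement of the hyperplanes. The cell P itself is the union of P^sharp and -P^sharp.\<close>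
definition cell_lift :: "real^'n^'n \<Rightarrow> (real^'n) set \<Rightarrow> real^'n \<Rightarrow> (real^'n) set" where
  "cell_lift Q L x = neg_cone Q L \<inter> closure (connected_component_set (open_chambers Q L) x)"

definition cell_of :: "real^'n^'n \<Rightarrow> (real^'n) set \<Rightarrow> real^'n \<Rightarrow> (real^'n) set" where
  "cell_of Q L x = cell_lift Q L x \<union> uminus ` cell_lift Q L x"

definition is_cell :: "real^'n^'n \<Rightarrow> (real^'n) set \<Rightarrow> (real^'n) set \<Rightarrow> bool" where
  "is_cell Q L P \<longleftrightarrow> (\<exists>x\<in>open_chambers Q L. P = cell_of Q L x)"

definition preserves_direct :: "real^'n^'n \<Rightarrow> (real^'n) set \<Rightarrow> (real^'n) set \<Rightarrow> (real^'n \<Rightarrow> real^'n) \<Rightarrow> bool" where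
  "preserves_direct Q L P g \<longleftrightarrow> g ` P = P \<and>
     (\<exists>x\<in>open_chambers Q L. P = cell_of Q L x \<and> g ` cell_lift Q L x = cell_lift Q L x)"

text \<open>Phi^b for the lift P^sharp = cell_lift Q L x: roots pairing negatively with an interior point
  of P^sharp whose hyperplane supports a wall (a codimension-one face) of P^sharp.\<close>
definition Phi_b :: "real^'n^'n \<Rightarrow> (real^'n) set \<Rightarrow> real^'n \<Rightarrow> (real^'n) set" where
  "Phi_b Q L x = {v \<in> Phi Q L.
      (\<exists>y\<in>connected_component_set (open_chambers Q L) x. bf Q v y < 0) \<and>
      (\<exists>p\<in>cell_lift Q L x. bf Q v p = 0 \<and>
         (\<exists>e>0. {y \<in> span L. bf Q v y = 0} \<inter> ball p e \<subseteq> cell_lift Q L x))}"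

definition three_primary :: "real^'n^'n \<Rightarrow> (real^'n) set \<Rightarrow> (real^'n) set" where
  "three_primary Q L = {x \<in> dual_lattice Q L. \<exists>k::nat. (3::real) ^ k *\<^sub>R x \<in> L}"

definition Z3_direct :: "real^'n^'n \<Rightarrow> (real^'n) set \<Rightarrow> (real^'n \<Rightarrow> real^'n) \<Rightarrow> bool" where
  "Z3_direct Q L g \<longleftrightarrow> (\<forall>x\<in>three_primary Q L. g x - x \<in> L)"

definition orth_sublattice :: "real^'n^'n \<Rightarrow> (real^'n) set \<Rightarrow> real^'n \<Rightarrow> (real^'n) set" where
  "orth_sublattice Q L v = {x \<in> L. bf Q x v = 0}"

end

theory Submission
  imports Defs
begin

text \<open>A root v in \<open>\<Phi>\<^sup>b\<close> supports a wall of \<open>P\<^sup>\<sharp>\<close> containing a relatively open piece of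
  \<open>v\<^sup>\<perp>\<close>. Every point q of that piece lies in an open chamber of \<open>\<Lambda>(L\<^sub>v)\<close>: a root u of
  \<open>L\<^sub>v\<close> is a root of L orthogonal to v, so if \<open>u\<^sup>\<perp>\<close> passed through q, moving from q along
  \<open>\<plusminus>u\<close> inside the wall would put \<open>P\<^sup>\<sharp>\<close> on both sides of \<open>u\<^sup>\<perp>\<close>. Since f fixes v and
  preserves \<open>P\<^sup>\<sharp>\<close>, it maps q to another such point, and the segment from q to f q stays
  in one chamber because points of \<open>P\<^sup>\<sharp>\<close> pair negatively (reverse Cauchy-Schwarz). Hence
  \<open>f\<^sub>v\<close> preserves the cell of q directly.

  For the \<open>\<int>/3\<close> part, \<open>y \<mapsto> 2y - (y\<cdot>v)v\<close> maps the 3-primary part of \<open>L\<^sup>*\<close> to that of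
  \<open>L\<^sub>v\<^sup>*\<close> and multiplies \<open>f y - y\<close> by 2, which is invertible modulo powers of 3.\<close>

section \<open>The bilinear form and lattices\<close>

lemma bf_commute: "transpose Q = Q \<Longrightarrow> bf Q x y = bf Q y x"
  by (metis bf_def dot_lmul_matrix inner_commute transpose_matrix_vector)

lemma bf_add_left [simp]: "bf Q (x + y) z = bf Q x z + bf Q y z"
  by (simp add: bf_def inner_add_left)

lemma bf_add_right [simp]: "bf Q z (x + y) = bf Q z x + bf Q z y"
  by (simp add: bf_def inner_add_right matrix_vector_right_distrib)

lemma bf_diff_left [simp]: "bf Q (x - y) z = bf Q x z - bf Q y z"
  by (simp add: bf_def inner_diff_left)

lemma bf_diff_right [simp]: "bf Q z (x - y) = bf Q z x - bf Q z y"
  by (simp add: bf_def inner_diff_right linear_diff[OF matrix_vector_mul_linear])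

lemma bf_scaleR_left [simp]: "bf Q (r *\<^sub>R x) z = r * bf Q x z"
  by (simp add: bf_def)

lemma bf_scaleR_right [simp]: "bf Q z (r *\<^sub>R x) = r * bf Q z x"
  by (simp add: bf_def linear_scale[OF matrix_vector_mul_linear])

lemma bf_minus_left [simp]: "bf Q (- x) z = - bf Q x z"
  by (simp add: bf_def)

lemma bf_minus_right [simp]: "bf Q z (- x) = - bf Q z x"
  by (simp add: bf_def linear_neg[OF matrix_vector_mul_linear])

lemma bf_zero_left [simp]: "bf Q 0 z = 0"
  and bf_zero_right [simp]: "bf Q z 0 = 0"
  by (simp_all add: bf_def)

lemma linear_bf_left: "linear (\<lambda>y. bf Q y u)"
  and linear_bf_right: "linear (\<lambda>y. bf Q u y)"
  by (simp_all add: linear_iff)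

lemma continuous_on_bf_left: "continuous_on S (\<lambda>y. bf Q y u)"
  and continuous_on_bf_right: "continuous_on S (\<lambda>y. bf Q u y)"
  by (simp_all add: linear_continuous_on linear_bf_left linear_bf_right
      flip: linear_conv_bounded_linear)

lemma integral_formD: "integral_form Q L \<Longrightarrow> x \<in> L \<Longrightarrow> y \<in> L \<Longrightarrow> bf Q x y \<in> \<int>"
  unfolding integral_form_def by blast

lemma lattice_add:
  assumes "is_lattice L" "x \<in> L" "y \<in> L"
  shows "x + y \<in> L"
proof -
  obtain B where L: "L = {\<Sum>b\<in>B. real_of_int (c b) *\<^sub>R b | c. True}"
    using assms(1) unfolding is_lattice_def by blast
  obtain c1 c2 where "x = (\<Sum>b\<in>B. real_of_int (c1 b) *\<^sub>R b)" "y = (\<Sum>b\<in>B. real_of_int (c2 b) *\<^sub>R b)"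
    using assms(2,3) L by blast
  then have "x + y = (\<Sum>b\<in>B. real_of_int (c1 b + c2 b) *\<^sub>R b)"
    by (simp add: sum.distrib scaleR_add_left)
  then show ?thesis
    unfolding L by (intro CollectI exI[where x = "\<lambda>b. c1 b + c2 b"]) simp
qed

lemma lattice_scaleR_int:
  assumes "is_lattice L" "x \<in> L" "r \<in> \<int>"
  shows "r *\<^sub>R x \<in> L"
proof -
  obtain B where L: "L = {\<Sum>b\<in>B. real_of_int (c b) *\<^sub>R b | c. True}"
    using assms(1) unfolding is_lattice_def by blast
  obtain c where "x = (\<Sum>b\<in>B. real_of_int (c b) *\<^sub>R b)"
    using assms(2) L by blast
  moreover obtain k where "r = real_of_int k"
    using assms(3) Ints_cases by blast
  ultimately have "r *\<^sub>R x = (\<Sum>b\<in>B. real_of_int (k * c b) *\<^sub>R b)"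
    by (simp add: scaleR_sum_right)
  then show ?thesis
    unfolding L by (intro CollectI exI[where x = "\<lambda>b. k * c b"]) simp
qed

lemma lattice_diff:
  assumes "is_lattice L" "x \<in> L" "y \<in> L"
  shows "x - y \<in> L"
  using lattice_add[OF assms(1,2) lattice_scaleR_int[OF assms(1,3), of "-1"]] by simp

lemma lattice_mem_if_coprime_multiples:
  assumes "is_lattice L" "coprime m n"
    and "real_of_int m *\<^sub>R x \<in> L" "real_of_int n *\<^sub>R x \<in> L"
  shows "x \<in> L"
proof -
  obtain a b where "a * m + b * n = 1"
    using bezout_int[of m n] assms(2) by auto
  then have "x = real_of_int a *\<^sub>R (real_of_int m *\<^sub>R x) + real_of_int b *\<^sub>R (real_of_int n *\<^sub>R x)"
    by (metis of_int_1 of_int_add of_int_mult scaleR_add_left scaleR_one scaleR_scaleR)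
  then show ?thesis
    using assms(1,3,4) by (metis lattice_add lattice_scaleR_int Ints_of_int)
qed

section \<open>The orthogonal sublattice of a root\<close>

lemma orth_sublattice_subset: "orth_sublattice Q L v \<subseteq> L"
  unfolding orth_sublattice_def by auto

lemma orth_projection_mem_orth_sublattice:
  assumes "transpose Q = Q" "is_lattice L" "integral_form Q L" "v \<in> L" "w \<in> L"
  shows "bf Q v v *\<^sub>R w - bf Q v w *\<^sub>R v \<in> orth_sublattice Q L v"
proof -
  have "bf Q v v *\<^sub>R w \<in> L" "bf Q v w *\<^sub>R v \<in> L"
    using assms by (simp_all add: lattice_scaleR_int integral_formD)
  then show ?thesis
    unfolding orth_sublattice_def using lattice_diff[OF assms(2)] bf_commute[OF assms(1), of w v]
    by (simp add: algebra_simps)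
qed

lemma orth_in_span_orth_sublattice:
  assumes "transpose Q = Q" "is_lattice L" "integral_form Q L" "v \<in> L" "bf Q v v \<noteq> 0"
    and "y \<in> span L" "bf Q v y = 0"
  shows "y \<in> span (orth_sublattice Q L v)"
proof -
  define \<pi> where "\<pi> x = x - (bf Q v x / bf Q v v) *\<^sub>R v" for x
  have "linear \<pi>"
    unfolding \<pi>_def linear_iff by (simp add: algebra_simps add_divide_distrib)
  moreover have "\<pi> ` L \<subseteq> span (orth_sublattice Q L v)"
  proof
    fix z assume "z \<in> \<pi> ` L"
    then obtain w where "w \<in> L" "z = \<pi> w" by auto
    then have "z = (1 / bf Q v v) *\<^sub>R (bf Q v v *\<^sub>R w - bf Q v w *\<^sub>R v)"
      unfolding \<pi>_def using assms(5) by (simp add: algebra_simps)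
    then show "z \<in> span (orth_sublattice Q L v)"
      using orth_projection_mem_orth_sublattice[OF assms(1-4) \<open>w \<in> L\<close>]
      by (simp add: span_base span_scale)
  qed
  ultimately have "\<pi> ` span L \<subseteq> span (orth_sublattice Q L v)"
    by (metis span_linear_image span_minimal subspace_span)
  moreover have "\<pi> y = y"
    unfolding \<pi>_def using assms(7) by simp
  ultimately show ?thesis
    using assms(6) by (metis image_eqI subsetD)
qed

lemma Phi_orth_sublattice_subset:
  assumes "transpose Q = Q" "is_lattice L" "integral_form Q L" "v \<in> L" "bf Q v v = 2"
  shows "Phi Q (orth_sublattice Q L v) \<subseteq> Phi Q L"
proof
  fix u assume u: "u \<in> Phi Q (orth_sublattice Q L v)"
  then have uL: "u \<in> L" and uv: "bf Q u v = 0"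
    unfolding Phi_def V_roots_def orth_sublattice_def by auto
  consider "bf Q u u = 2" | "bf Q u u = 6" and "\<forall>a\<in>orth_sublattice Q L v. 2 * bf Q u a / 6 \<in> \<int>"
    using u unfolding Phi_def V_roots_def by auto
  then show "u \<in> Phi Q L"
  proof cases
    case 1
    then show ?thesis
      using uL integral_formD[OF assms(3) uL] unfolding Phi_def V_roots_def by simp
  next
    case 2
    have "2 * bf Q u w / 6 \<in> \<int>" if "w \<in> L" for w
    proof -
      have uw: "bf Q u w \<in> \<int>"
        using integral_formD[OF assms(3) uL that] .
      have "2 * bf Q u (2 *\<^sub>R w - bf Q v w *\<^sub>R v) / 6 \<in> \<int>"
        using 2(2) orth_projection_mem_orth_sublattice[OF assms(1-4) that] assms(5) by metis
      then have "2 * bf Q u w / 3 \<in> \<int>"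
        using uv by simp
      then have "bf Q u w - 2 * bf Q u w / 3 \<in> \<int>"
        using uw by (rule Ints_diff[rotated])
      then show ?thesis
        by simp
    qed
    then show ?thesis
      using 2 uL unfolding Phi_def V_roots_def by simp
  qed
qed

lemma three_primary_orth_projection:
  assumes "transpose Q = Q" "is_lattice L" "integral_form Q L" "v \<in> L" "bf Q v v \<noteq> 0"
    and "y \<in> three_primary Q L"
  shows "bf Q v v *\<^sub>R y - bf Q v y *\<^sub>R v \<in> three_primary Q (orth_sublattice Q L v)"
    (is "?x \<in> _")
proof -
  have y: "y \<in> span L" "\<forall>w\<in>L. bf Q y w \<in> \<int>"
    using assms(6) unfolding three_primary_def dual_lattice_def by auto
  obtain k where "(3::real) ^ k *\<^sub>R y \<in> L"
    using assms(6) unfolding three_primary_def by auto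
  from orth_projection_mem_orth_sublattice[OF assms(1-4) this]
  have "(3::real) ^ k *\<^sub>R ?x \<in> orth_sublattice Q L v"
    by (simp add: algebra_simps)
  moreover have "?x \<in> span (orth_sublattice Q L v)"
    using y(1) assms(4) by (intro orth_in_span_orth_sublattice[OF assms(1-5)])
      (simp_all add: span_diff span_scale span_base algebra_simps)
  moreover have "bf Q ?x w \<in> \<int>" if "w \<in> orth_sublattice Q L v" for w
  proof -
    have "w \<in> L" "bf Q v w = 0"
      using that bf_commute[OF assms(1)] unfolding orth_sublattice_def by auto
    then show ?thesis
      using y(2) integral_formD[OF assms(3,4,4)] by simp
  qed
  ultimately show ?thesis
    unfolding three_primary_def dual_lattice_def by blast
qed

lemma Z3_direct_of_orth_sublattice:
  assumes "transpose Q = Q" "is_lattice L" "integral_form Q L" "v \<in> L" "bf Q v v = 2"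
    and "linear f" "f ` L \<subseteq> L" "f v = v"
    and "Z3_direct Q (orth_sublattice Q L v) f"
  shows "Z3_direct Q L f"
  unfolding Z3_direct_def
proof
  fix y assume y: "y \<in> three_primary Q L"
  obtain k where k: "(3::real) ^ k *\<^sub>R y \<in> L"
    using y unfolding three_primary_def by auto
  let ?x = "bf Q v v *\<^sub>R y - bf Q v y *\<^sub>R v"
  have "f ?x - ?x \<in> L"
    using assms(9) three_primary_orth_projection[OF assms(1-4) _ y] assms(5)
      orth_sublattice_subset unfolding Z3_direct_def by fastforce
  moreover have "f ?x - ?x = 2 *\<^sub>R (f y - y)"
    using assms(5,8) by (simp add: linear_diff[OF assms(6)] linear_scale[OF assms(6)] algebra_simps)
  ultimately have "real_of_int 2 *\<^sub>R (f y - y) \<in> L"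
    by simp
  moreover have "real_of_int (3 ^ k) *\<^sub>R (f y - y) = f ((3::real) ^ k *\<^sub>R y) - (3::real) ^ k *\<^sub>R y"
    by (simp add: linear_scale[OF assms(6)] algebra_simps)
  then have "real_of_int (3 ^ k) *\<^sub>R (f y - y) \<in> L"
    using k assms(7) lattice_diff[OF assms(2)] by auto
  moreover have "coprime (3 ^ k) (2::int)"
    by simp
  ultimately show "f y - y \<in> L"
    using lattice_mem_if_coprime_multiples[OF assms(2)] by blast
qed

section \<open>Automorphisms\<close>

lemma automorphism_mem:
  assumes "automorphism Q L f" "x \<in> L"
  shows "f x \<in> L"
proof -
  have "f x \<in> f ` L"
    using assms(2) by (rule imageI)
  then show ?thesis
    using assms(1) unfolding automorphism_def by simp
qed

lemma automorphism_preimage: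
  assumes "automorphism Q L f" "y \<in> L"
  obtains x where "x \<in> L" "f x = y"
proof -
  have "y \<in> f ` L"
    using assms unfolding automorphism_def by simp
  then show ?thesis
    using that by blast
qed

lemma automorphism_bf:
  assumes "automorphism Q L f" "x \<in> span L" "y \<in> span L"
  shows "bf Q (f x) (f y) = bf Q x y"
proof -
  have f: "linear f" "\<forall>x\<in>L. \<forall>y\<in>L. bf Q (f x) (f y) = bf Q x y"
    using assms(1) unfolding automorphism_def by auto
  have subspace: "subspace {x. bf Q (f x) (f y) = bf Q x y}"
    "subspace {y. bf Q (f x) (f y) = bf Q x y}" for x y
    unfolding subspace_def by (simp_all add: linear_add[OF f(1)] linear_scale[OF f(1)] linear_0[OF f(1)])
  have on_L: "bf Q (f x) (f w) = bf Q x w" if "w \<in> L" for w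
    by (rule span_induct[OF assms(2) subspace(1)]) (use f(2) that in simp)
  show ?thesis
    by (rule span_induct[OF assms(3) subspace(2)]) (use on_L in simp)
qed

lemma automorphism_span:
  assumes "automorphism Q L f"
  shows "f ` span L = span L"
proof -
  have "linear f" "f ` L = L"
    using assms unfolding automorphism_def by auto
  then show ?thesis
    using span_linear_image[of f L] by simp
qed

lemma Phi_subset_image_automorphism:
  assumes "automorphism Q L f"
  shows "Phi Q L \<subseteq> f ` Phi Q L"
proof
  fix u assume u: "u \<in> Phi Q L"
  then have "u \<in> L"
    unfolding Phi_def V_roots_def by auto
  then obtain u' where u': "u' \<in> L" "f u' = u"
    using automorphism_preimage[OF assms] by blast
  have pairing: "bf Q u' w = bf Q u (f w)" if "w \<in> L" for w
    using automorphism_bf[OF assms] u'(1) that by (simp add: span_base flip: u'(2))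
  have norm: "bf Q u' u' = bf Q u u"
    using pairing[OF u'(1)] u'(2) by simp
  have "2 * bf Q u' w / bf Q u' u' \<in> \<int>" if "w \<in> L" for w
  proof -
    have "2 * bf Q u (f w) / bf Q u u \<in> \<int>"
      using u automorphism_mem[OF assms that] unfolding Phi_def V_roots_def by blast
    then show ?thesis
      using pairing[OF that] norm by simp
  qed
  moreover have "bf Q u' u' = 2 \<or> bf Q u' u' = 6"
    using u norm unfolding Phi_def V_roots_def by auto
  ultimately have "u' \<in> Phi Q L"
    using u'(1) unfolding Phi_def V_roots_def by auto
  then show "u \<in> f ` Phi Q L"
    using u'(2) by blast
qed

lemma automorphism_open_chambers:
  assumes "automorphism Q L f"
  shows "f ` open_chambers Q L \<subseteq> open_chambers Q L"
proof
  fix z assume "z \<in> f ` open_chambers Q L"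
  then obtain y where y: "y \<in> open_chambers Q L" "z = f y" by auto
  then have "y \<in> span L"
    unfolding open_chambers_def neg_cone_def by auto
  have "bf Q u z \<noteq> 0" if u: "u \<in> Phi Q L" for u
  proof -
    obtain u' where "u' \<in> Phi Q L" "u = f u'"
      using u Phi_subset_image_automorphism[OF assms] by blast
    moreover have "u' \<in> span L"
      using \<open>u' \<in> Phi Q L\<close> unfolding Phi_def V_roots_def by (auto intro: span_base)
    ultimately show ?thesis
      using y automorphism_bf[OF assms _ \<open>y \<in> span L\<close>] unfolding open_chambers_def by auto
  qed
  moreover have "z \<in> span L" "bf Q z z < 0"
    using y automorphism_span[OF assms] automorphism_bf[OF assms \<open>y \<in> span L\<close> \<open>y \<in> span L\<close>]
    unfolding open_chambers_def neg_cone_def by auto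
  ultimately show "z \<in> open_chambers Q L"
    unfolding open_chambers_def neg_cone_def by auto
qed

lemma automorphism_neg_cone:
  assumes "automorphism Q L f"
  shows "f ` neg_cone Q L \<subseteq> neg_cone Q L"
proof
  fix z assume "z \<in> f ` neg_cone Q L"
  then obtain y where "y \<in> span L" "bf Q y y < 0" "z = f y"
    unfolding neg_cone_def by auto
  then show "z \<in> neg_cone Q L"
    using automorphism_span[OF assms] automorphism_bf[OF assms] unfolding neg_cone_def by auto
qed

lemma automorphism_connected_component:
  assumes "automorphism Q L f"
  shows "f ` connected_component_set (open_chambers Q L) y
           \<subseteq> connected_component_set (open_chambers Q L) (f y)"
proof (cases "y \<in> open_chambers Q L")
  case True
  have "continuous_on UNIV f"
    using assms unfolding automorphism_def by (simp add: linear_continuous_on linear_linear)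
  then have "connected (f ` connected_component_set (open_chambers Q L) y)"
    by (meson connected_connected_component connected_continuous_image continuous_on_subset subset_UNIV)
  moreover have "f ` connected_component_set (open_chambers Q L) y \<subseteq> open_chambers Q L"
    using automorphism_open_chambers[OF assms] connected_component_subset by blast
  ultimately show ?thesis
    using True by (intro connected_component_maximal) auto
qed (metis connected_component_eq_empty empty_subsetI image_empty)

lemma automorphism_cell_lift:
  assumes "automorphism Q L f" "f x \<in> connected_component_set (open_chambers Q L) x"
  shows "f ` cell_lift Q L x \<subseteq> cell_lift Q L x"
proof -
  let ?K = "connected_component_set (open_chambers Q L) x"
  have "linear f"
    using assms(1) unfolding automorphism_def by blast
  have "f ` closure ?K \<subseteq> closure (f ` ?K)"
    by (rule closure_linear_image_subset[OF \<open>linear f\<close>])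
  also have "\<dots> \<subseteq> closure ?K"
    using automorphism_connected_component[OF assms(1), of x]
    unfolding connected_component_eq[OF assms(2)] by (rule closure_mono)
  finally have "f ` closure ?K \<subseteq> closure ?K" .
  moreover have "f ` cell_lift Q L x \<subseteq> f ` neg_cone Q L \<inter> f ` closure ?K"
    unfolding cell_lift_def by (rule image_Int_subset)
  ultimately show ?thesis
    using automorphism_neg_cone[OF assms(1)] unfolding cell_lift_def by blast
qed

lemma automorphism_inverse:
  assumes "automorphism Q L f" "span L = UNIV"
  obtains g where "automorphism Q L g" "\<And>x. g (f x) = x" "\<And>x. f (g x) = x"
proof -
  have f: "linear f" "f ` L = L"
    using assms(1) unfolding automorphism_def by auto
  have "surj f"
    using automorphism_span[OF assms(1)] assms(2) by simp
  then obtain g where g: "linear g" "\<And>x. g (f x) = x" "\<And>x. f (g x) = x"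
    using linear_surjective_isomorphism[OF f(1)] by blast
  have "g ` L = g ` f ` L"
    using f(2) by simp
  also have "\<dots> = L"
    using g(2) by (simp add: image_image)
  finally have gL: "g ` L = L" .
  have "bf Q (g x) (g y) = bf Q x y" if "x \<in> L" "y \<in> L" for x y
  proof -
    have "g x \<in> span L" "g y \<in> span L"
      using gL that by (auto intro: span_base)
    then show ?thesis
      using automorphism_bf[OF assms(1), of "g x" "g y"] g(3) by simp
  qed
  with g(1) gL have "automorphism Q L g"
    unfolding automorphism_def by blast
  then show ?thesis
    using g(2,3) by (rule that)
qed

lemma automorphism_orth_sublattice:
  assumes "automorphism Q L f" "v \<in> L" "f v = v"
  shows "automorphism Q (orth_sublattice Q L v) f"
proof -
  have orth_iff: "x \<in> orth_sublattice Q L v \<longleftrightarrow> f x \<in> orth_sublattice Q L v" if "x \<in> L" for x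
  proof -
    have "bf Q (f x) (f v) = bf Q x v"
      using automorphism_bf[OF assms(1)] that assms(2) by (simp add: span_base)
    then show ?thesis
      using that automorphism_mem[OF assms(1) that] assms(3) unfolding orth_sublattice_def by simp
  qed
  have image: "f ` orth_sublattice Q L v = orth_sublattice Q L v"
  proof (intro equalityI subsetI)
    fix z assume "z \<in> f ` orth_sublattice Q L v"
    then obtain x where "x \<in> orth_sublattice Q L v" "z = f x"
      by blast
    then show "z \<in> orth_sublattice Q L v"
      using orth_iff[of x] orth_sublattice_subset[of Q L v] by auto
  next
    fix z assume z: "z \<in> orth_sublattice Q L v"
    then obtain x where "x \<in> L" "f x = z"
      using automorphism_preimage[OF assms(1)] orth_sublattice_subset[of Q L v] by blast
    then show "z \<in> f ` orth_sublattice Q L v"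
      using z orth_iff[of x] by blast
  qed
  have form: "bf Q (f x) (f y) = bf Q x y"
    if "x \<in> orth_sublattice Q L v" "y \<in> orth_sublattice Q L v" for x y
  proof -
    have "x \<in> span L" "y \<in> span L"
      using that orth_sublattice_subset[of Q L v] by (auto intro: span_base)
    then show ?thesis
      by (rule automorphism_bf[OF assms(1)])
  qed
  have "linear f"
    using assms(1) unfolding automorphism_def by blast
  with image form show ?thesis
    unfolding automorphism_def by blast
qed

lemma preserves_direct_cell_of:
  assumes "linear f" "p \<in> open_chambers Q L" "f ` cell_lift Q L p = cell_lift Q L p"
  shows "preserves_direct Q L (cell_of Q L p) f"
proof -
  have "f ` (uminus ` cell_lift Q L p) = uminus ` (f ` cell_lift Q L p)"
    using linear_neg[OF assms(1)] by (simp add: image_image)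
  then have "f ` (uminus ` cell_lift Q L p) = uminus ` cell_lift Q L p"
    using assms(3) by simp
  then have "f ` cell_of Q L p = cell_of Q L p"
    unfolding cell_of_def image_Un using assms(3) by simp
  then show ?thesis
    unfolding preserves_direct_def using assms(2,3) by blast
qed

lemma automorphism_preserves_direct:
  assumes "automorphism Q L f" "automorphism Q L g" "\<And>x. g (f x) = x" "\<And>x. f (g x) = x"
    and "p \<in> open_chambers Q L" "f p \<in> connected_component_set (open_chambers Q L) p"
  shows "preserves_direct Q L (cell_of Q L p) f"
proof -
  have "p \<in> connected_component_set (open_chambers Q L) (f p)"
    using connected_component_eq[OF assms(6)] assms(5) by simp
  then have "g p \<in> connected_component_set (open_chambers Q L) (g (f p))"
    using automorphism_connected_component[OF assms(2)] by blast
  then have "g p \<in> connected_component_set (open_chambers Q L) p"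
    using assms(3) by simp
  then have "g ` cell_lift Q L p \<subseteq> cell_lift Q L p"
    by (rule automorphism_cell_lift[OF assms(2)])
  have "cell_lift Q L p \<subseteq> f ` cell_lift Q L p"
  proof
    fix c assume "c \<in> cell_lift Q L p"
    then have "f (g c) \<in> f ` cell_lift Q L p"
      using \<open>g ` cell_lift Q L p \<subseteq> cell_lift Q L p\<close> by blast
    then show "c \<in> f ` cell_lift Q L p"
      using assms(4) by simp
  qed
  then have "f ` cell_lift Q L p = cell_lift Q L p"
    using automorphism_cell_lift[OF assms(1,6)] by blast
  moreover have "linear f"
    using assms(1) unfolding automorphism_def by blast
  ultimately show ?thesis
    using assms(5) preserves_direct_cell_of by blast
qed

section \<open>Cells and their walls\<close>

lemma connected_nonvanishing_sign:
  fixes \<phi> :: "'a::topological_space \<Rightarrow> real"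
  assumes "connected S" "continuous_on S \<phi>" "\<forall>y\<in>S. \<phi> y \<noteq> 0"
  shows "(\<forall>y\<in>S. 0 < \<phi> y) \<or> (\<forall>y\<in>S. \<phi> y < 0)"
proof (rule ccontr)
  assume "\<not> ?thesis"
  then obtain a b where "a \<in> S" "b \<in> S" "\<phi> a \<le> 0" "0 \<le> \<phi> b"
    by (meson not_less)
  moreover have "connected (\<phi> ` S)"
    by (rule connected_continuous_image[OF assms(2,1)])
  ultimately have "0 \<in> \<phi> ` S"
    by (metis connectedD_interval image_eqI)
  then show False
    using assms(3) by auto
qed

lemma cell_lift_one_side:
  assumes "u \<in> Phi Q L"
  shows "(\<forall>y\<in>cell_lift Q L x. 0 \<le> bf Q u y) \<or> (\<forall>y\<in>cell_lift Q L x. bf Q u y \<le> 0)"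
proof -
  let ?K = "connected_component_set (open_chambers Q L) x"
  have "\<forall>y\<in>?K. bf Q u y \<noteq> 0"
    using connected_component_subset assms unfolding open_chambers_def by blast
  then consider "\<forall>y\<in>?K. 0 < bf Q u y" | "\<forall>y\<in>?K. bf Q u y < 0"
    using connected_nonvanishing_sign[OF connected_connected_component continuous_on_bf_right] by blast
  then show ?thesis
  proof cases
    case 1
    then have "closure ?K \<subseteq> {y. 0 \<le> bf Q u y}"
      by (intro closure_minimal) (auto intro: closed_Collect_le continuous_on_bf_right continuous_on_const)
    then show ?thesis
      unfolding cell_lift_def by auto
  next
    case 2
    then have "closure ?K \<subseteq> {y. bf Q u y \<le> 0}"
      by (intro closure_minimal) (auto intro: closed_Collect_le continuous_on_bf_right continuous_on_const)
    then show ?thesis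
      unfolding cell_lift_def by auto
  qed
qed

lemma cell_lift_bf_self_neg: "y \<in> cell_lift Q L x \<Longrightarrow> bf Q y y < 0"
  unfolding cell_lift_def neg_cone_def by auto

text \<open>The points witnessing \<open>v \<in> \<Phi>\<^sup>b\<close>: relative interior points of the wall of the lift
  cut out by \<open>v\<^sup>\<perp>\<close>.\<close>

definition wall_point :: "real^'n^'n \<Rightarrow> (real^'n) set \<Rightarrow> real^'n \<Rightarrow> real^'n \<Rightarrow> real^'n \<Rightarrow> bool" where
  "wall_point Q L x v q \<longleftrightarrow> q \<in> cell_lift Q L x \<and> bf Q v q = 0 \<and>
     (\<exists>\<epsilon>>0. {y \<in> span L. bf Q v y = 0} \<inter> ball q \<epsilon> \<subseteq> cell_lift Q L x)"

lemma wall_point_bf_root_nonzero: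
  assumes "wall_point Q L x v q" "u \<in> Phi Q L" "bf Q v u = 0"
  shows "bf Q u q \<noteq> 0"
proof
  assume uq: "bf Q u q = 0"
  obtain \<epsilon> where qP: "q \<in> cell_lift Q L x" and qv: "bf Q v q = 0" and "\<epsilon> > 0"
    and ball: "{y \<in> span L. bf Q v y = 0} \<inter> ball q \<epsilon> \<subseteq> cell_lift Q L x"
    using assms(1) unfolding wall_point_def by blast
  have "u \<in> L" "0 < bf Q u u"
    using assms(2) unfolding Phi_def V_roots_def by auto
  define \<delta> where "\<delta> = \<epsilon> / (norm u + 1)"
  have "0 < \<delta>" "\<delta> * norm u < \<epsilon>"
    unfolding \<delta>_def using \<open>\<epsilon> > 0\<close> by (simp_all add: field_simps add_pos_nonneg)
  have near: "q + c *\<^sub>R u \<in> cell_lift Q L x" if "\<bar>c\<bar> = \<delta>" for c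
  proof -
    have "norm (c *\<^sub>R u) < \<epsilon>"
      using that \<open>\<delta> * norm u < \<epsilon>\<close> by simp
    moreover have "q \<in> span L"
      using qP unfolding cell_lift_def neg_cone_def by auto
    then have "q + c *\<^sub>R u \<in> span L"
      by (rule span_add[OF _ span_scale[OF span_base[OF \<open>u \<in> L\<close>]]])
    ultimately show ?thesis
      using ball qv assms(3) by (auto simp: dist_norm)
  qed
  have "0 < bf Q u (q + \<delta> *\<^sub>R u)" "bf Q u (q + (- \<delta>) *\<^sub>R u) < 0"
    using uq \<open>0 < \<delta>\<close> \<open>0 < bf Q u u\<close> by simp_all
  moreover have "q + \<delta> *\<^sub>R u \<in> cell_lift Q L x" "q + (- \<delta>) *\<^sub>R u \<in> cell_lift Q L x"
    using near[of \<delta>] near[of "- \<delta>"] \<open>0 < \<delta>\<close> by simp_all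
  ultimately show False
    using cell_lift_one_side[OF assms(2), of x] by force
qed

lemma wall_point_open_chambers:
  assumes "transpose Q = Q" "is_lattice L" "integral_form Q L" "v \<in> L" "bf Q v v = 2"
    and "wall_point Q L x v q"
  shows "q \<in> open_chambers Q (orth_sublattice Q L v)"
proof -
  have q: "q \<in> span L" "bf Q q q < 0" "bf Q v q = 0"
    using assms(6) unfolding wall_point_def cell_lift_def neg_cone_def by auto
  have "bf Q u q \<noteq> 0" if u: "u \<in> Phi Q (orth_sublattice Q L v)" for u
  proof -
    have "bf Q v u = 0"
      using u bf_commute[OF assms(1)] unfolding Phi_def V_roots_def orth_sublattice_def by auto
    moreover have "u \<in> Phi Q L"
      using u Phi_orth_sublattice_subset[OF assms(1-5)] by blast
    ultimately show ?thesis
      using wall_point_bf_root_nonzero[OF assms(6)] by blast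
  qed
  moreover have "q \<in> span (orth_sublattice Q L v)"
    using orth_in_span_orth_sublattice[OF assms(1-4)] assms(5) q(1,3) by simp
  ultimately show ?thesis
    using q(2) unfolding open_chambers_def neg_cone_def by blast
qed

lemma linear_image_ball_subset:
  fixes g :: "'a::euclidean_space \<Rightarrow> 'b::real_normed_vector"
  assumes "linear g" "0 < \<epsilon>"
  obtains \<delta> where "0 < \<delta>" "g ` ball y \<delta> \<subseteq> ball (g y) \<epsilon>"
proof -
  obtain M where "0 < M" and M: "\<And>z. norm (g z) \<le> M * norm z"
    using linear_bounded_pos[OF assms(1)] by metis
  have "dist (g y) (g z) < \<epsilon>" if "dist y z < \<epsilon> / M" for z
  proof -
    have "dist (g y) (g z) \<le> M * norm (y - z)"
      using M[of "y - z"] linear_diff[OF assms(1)] by (simp add: dist_norm)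
    also have "\<dots> < M * (\<epsilon> / M)"
      using that \<open>0 < M\<close> by (intro mult_strict_left_mono) (simp_all add: dist_norm)
    finally show ?thesis
      using \<open>0 < M\<close> by simp
  qed
  then have "g ` ball y (\<epsilon> / M) \<subseteq> ball (g y) \<epsilon>"
    by auto
  moreover have "0 < \<epsilon> / M"
    using assms(2) \<open>0 < M\<close> by simp
  ultimately show ?thesis
    using that by blast
qed

lemma wall_point_image:
  assumes "automorphism Q L f" "automorphism Q L g" "\<And>x. g (f x) = x" "\<And>x. f (g x) = x"
    and "v \<in> L" "f v = v" "f ` cell_lift Q L x \<subseteq> cell_lift Q L x"
    and "wall_point Q L x v q"
  shows "wall_point Q L x v (f q)"
proof -
  obtain \<epsilon> where qP: "q \<in> cell_lift Q L x" and qv: "bf Q v q = 0" and "\<epsilon> > 0"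
    and ball: "{y \<in> span L. bf Q v y = 0} \<inter> ball q \<epsilon> \<subseteq> cell_lift Q L x"
    using assms(8) unfolding wall_point_def by blast
  have "q \<in> span L" "v \<in> span L"
    using qP assms(5) unfolding cell_lift_def neg_cone_def by (auto intro: span_base)
  have "linear g"
    using assms(2) unfolding automorphism_def by blast
  then obtain \<delta> where "0 < \<delta>" and \<delta>: "g ` ball (f q) \<delta> \<subseteq> ball q \<epsilon>"
    using linear_image_ball_subset[OF _ \<open>\<epsilon> > 0\<close>] assms(3) by metis
  have "{y \<in> span L. bf Q v y = 0} \<inter> ball (f q) \<delta> \<subseteq> cell_lift Q L x"
  proof
    fix z assume z: "z \<in> {y \<in> span L. bf Q v y = 0} \<inter> ball (f q) \<delta>"
    have "g v = v"
      using assms(3)[of v] assms(6) by simp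
    then have "bf Q v (g z) = 0"
      using z automorphism_bf[OF assms(2) \<open>v \<in> span L\<close>, of z] by simp
    moreover have "g z \<in> span L"
      using z automorphism_span[OF assms(2)] by blast
    moreover have "g z \<in> ball q \<epsilon>"
      using z \<delta> by blast
    ultimately have "g z \<in> cell_lift Q L x"
      using ball by blast
    then show "z \<in> cell_lift Q L x"
      using assms(4,7) by (metis image_subset_iff)
  qed
  moreover have "bf Q v (f q) = 0"
    using automorphism_bf[OF assms(1) \<open>v \<in> span L\<close> \<open>q \<in> span L\<close>] assms(6) qv by simp
  moreover have "f q \<in> cell_lift Q L x"
    using assms(7) qP by blast
  ultimately show ?thesis
    unfolding wall_point_def using \<open>0 < \<delta>\<close> by blast
qed

lemma convex_combination_same_sign:
  fixes a b t :: real
  assumes "0 < a * b" "0 \<le> t" "t \<le> 1"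
  shows "0 < a * ((1 - t) * a + t * b)"
proof -
  have "a * ((1 - t) * a + t * b) = (1 - t) * a\<^sup>2 + t * (a * b)"
    by (simp add: algebra_simps power2_eq_square)
  also have "\<dots> > 0"
  proof (cases "t = 1")
    case False
    have "a \<noteq> 0"
      using assms(1) by auto
    with False assms(3) have "0 < (1 - t) * a\<^sup>2"
      by (intro mult_pos_pos) simp_all
    then show ?thesis
      using assms by (simp add: add_pos_nonneg)
  qed (use assms(1) in simp)
  finally show ?thesis .
qed

lemma closed_segment_subset_open_chambers:
  assumes "transpose Q = Q" "q1 \<in> open_chambers Q L" "q2 \<in> open_chambers Q L" "bf Q q1 q2 < 0"
    and "\<And>u. u \<in> Phi Q L \<Longrightarrow> 0 < bf Q u q1 * bf Q u q2"
  shows "closed_segment q1 q2 \<subseteq> open_chambers Q L"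
proof
  fix r assume "r \<in> closed_segment q1 q2"
  then obtain t where t: "0 \<le> t" "t \<le> 1" and r: "r = (1 - t) *\<^sub>R q1 + t *\<^sub>R q2"
    unfolding closed_segment_def by auto
  have q: "q1 \<in> span L" "q2 \<in> span L" "bf Q q1 q1 < 0" "bf Q q2 q2 < 0"
    using assms(2,3) unfolding open_chambers_def neg_cone_def by auto
  have "r \<in> span L"
    unfolding r using q by (intro span_add span_scale)
  have "bf Q r r = (1 - t)\<^sup>2 * bf Q q1 q1 + 2 * t * (1 - t) * bf Q q1 q2 + t\<^sup>2 * bf Q q2 q2"
    unfolding r using bf_commute[OF assms(1), of q2 q1] by (simp add: algebra_simps power2_eq_square)
  also have "\<dots> < 0"
  proof (cases "t = 0")
    case False
    then have "t\<^sup>2 * bf Q q2 q2 < 0"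
      using t q(4) by (simp add: mult_pos_neg)
    moreover have "(1 - t)\<^sup>2 * bf Q q1 q1 \<le> 0" "2 * t * (1 - t) * bf Q q1 q2 \<le> 0"
      using t q(3) assms(4) by (simp_all add: mult_nonneg_nonpos)
    ultimately show ?thesis
      by linarith
  qed (use q(3) in simp)
  finally have "bf Q r r < 0" .
  moreover have "bf Q u r \<noteq> 0" if "u \<in> Phi Q L" for u
  proof -
    have "0 < bf Q u q1 * ((1 - t) * bf Q u q1 + t * bf Q u q2)"
      using assms(5)[OF that] t by (rule convex_combination_same_sign)
    then show ?thesis
      unfolding r by auto
  qed
  ultimately show "r \<in> open_chambers Q L"
    using \<open>r \<in> span L\<close> unfolding open_chambers_def neg_cone_def by blast
qed

section \<open>Time orientation\<close>

lemma quadratic_nonneg_discriminant: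
  fixes A b C :: real
  assumes "\<forall>t. 0 \<le> A + 2 * t * b + t\<^sup>2 * C" "0 \<le> C"
  shows "b\<^sup>2 \<le> A * C"
proof (cases "C = 0")
  case True
  show ?thesis
  proof (cases "b = 0")
    case False
    have "0 \<le> A + 2 * (- (A + 1) / (2 * b)) * b + (- (A + 1) / (2 * b))\<^sup>2 * C"
      using assms(1) by blast
    then show ?thesis
      using False True by (simp add: field_simps)
  qed (use True in simp)
next
  case False
  then have "0 < C"
    using assms(2) by simp
  have "0 \<le> A + 2 * (- b / C) * b + (- b / C)\<^sup>2 * C"
    using assms(1) by blast
  then show ?thesis
    using \<open>0 < C\<close> by (simp add: field_simps power2_eq_square)
qed

locale lorentzian_form =
  fixes Q :: "real^'n^'n" and e :: "real^'n"
  assumes symmetric: "transpose Q = Q"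
    and timelike_axis: "bf Q e e < 0"
    and positive_on_orthogonal: "\<And>x. x \<noteq> 0 \<Longrightarrow> bf Q x e = 0 \<Longrightarrow> 0 < bf Q x x"
begin

lemma nonneg_on_orthogonal: "bf Q x e = 0 \<Longrightarrow> 0 \<le> bf Q x x"
  using positive_on_orthogonal[of x] by (cases "x = 0") auto

lemma bf_e_nonzero: "bf Q y y < 0 \<Longrightarrow> bf Q y e \<noteq> 0"
  using nonneg_on_orthogonal[of y] by force

lemma cauchy_schwarz_orthogonal:
  assumes "bf Q y e = 0" "bf Q z e = 0"
  shows "(bf Q y z)\<^sup>2 \<le> bf Q y y * bf Q z z"
proof -
  have "0 \<le> bf Q y y + 2 * t * bf Q y z + t\<^sup>2 * bf Q z z" for t
  proof -
    have "0 \<le> bf Q (y + t *\<^sub>R z) (y + t *\<^sub>R z)"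
      using assms by (intro nonneg_on_orthogonal) simp
    also have "\<dots> = bf Q y y + 2 * t * bf Q y z + t\<^sup>2 * bf Q z z"
      using bf_commute[OF symmetric, of z y] by (simp add: algebra_simps power2_eq_square)
    finally show ?thesis .
  qed
  then show ?thesis
    using nonneg_on_orthogonal[OF assms(2)] by (intro quadratic_nonneg_discriminant) simp_all
qed

lemma reverse_cauchy_schwarz:
  assumes "bf Q y y < 0" "bf Q y e < 0" "bf Q z z < 0" "bf Q z e < 0"
  shows "bf Q y z < 0"
proof -
  define c where "c = - bf Q e e"
  have "0 < c"
    unfolding c_def using timelike_axis by simp
  define a b where "a = bf Q y e / bf Q e e" and "b = bf Q z e / bf Q e e"
  have "0 < a" "0 < b"
    unfolding a_def b_def using assms(2,4) timelike_axis by (simp_all add: divide_neg_neg)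
  define y' z' where "y' = y - a *\<^sub>R e" and "z' = z - b *\<^sub>R e"
  have "a * bf Q e e = bf Q y e" "b * bf Q e e = bf Q z e"
    unfolding a_def b_def using timelike_axis by simp_all
  then have orth: "bf Q y' e = 0" "bf Q z' e = 0"
    unfolding y'_def z'_def by simp_all
  then have orth': "bf Q e y' = 0" "bf Q e z' = 0"
    using bf_commute[OF symmetric, of e] by simp_all
  have y: "y = y' + a *\<^sub>R e" and z: "z = z' + b *\<^sub>R e"
    unfolding y'_def z'_def by simp_all
  have yy: "bf Q y y = bf Q y' y' - a\<^sup>2 * c"
    and zz: "bf Q z z = bf Q z' z' - b\<^sup>2 * c"
    and yz: "bf Q y z = bf Q y' z' - a * b * c"
    unfolding y z c_def using orth orth' by (simp_all add: algebra_simps power2_eq_square)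
  have "(bf Q y' z')\<^sup>2 \<le> bf Q y' y' * bf Q z' z'"
    by (rule cauchy_schwarz_orthogonal[OF orth])
  also have "\<dots> < (a\<^sup>2 * c) * (b\<^sup>2 * c)"
    using yy zz assms(1,3) nonneg_on_orthogonal[OF orth(1)] nonneg_on_orthogonal[OF orth(2)]
    by (intro mult_strict_mono') simp_all
  also have "\<dots> = (a * b * c)\<^sup>2"
    by (simp add: power2_eq_square)
  finally have "(bf Q y' z')\<^sup>2 < (a * b * c)\<^sup>2" .
  moreover have "0 \<le> a * b * c"
    using \<open>0 < a\<close> \<open>0 < b\<close> \<open>0 < c\<close> by simp
  ultimately have "bf Q y' z' < a * b * c"
    by (rule power2_less_imp_less)
  then show ?thesis
    using yz by simp
qed

lemma cell_lift_bf_e_neg: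
  assumes "x \<in> open_chambers Q L" "bf Q x e < 0" "y \<in> cell_lift Q L x"
  shows "bf Q y e < 0"
proof -
  let ?K = "connected_component_set (open_chambers Q L) x"
  have "\<forall>y\<in>?K. bf Q y e \<noteq> 0"
    using connected_component_subset bf_e_nonzero unfolding open_chambers_def neg_cone_def by blast
  then have "(\<forall>y\<in>?K. 0 < bf Q y e) \<or> (\<forall>y\<in>?K. bf Q y e < 0)"
    by (rule connected_nonvanishing_sign[OF connected_connected_component continuous_on_bf_left])
  moreover have "x \<in> ?K"
    using assms(1) by simp
  ultimately have "\<forall>y\<in>?K. bf Q y e < 0"
    using assms(2) by (meson less_asym)
  then have "closure ?K \<subseteq> {y. bf Q y e \<le> 0}"
    by (intro closure_minimal) (auto intro: closed_Collect_le continuous_on_bf_left continuous_on_const)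
  then have "bf Q y e \<le> 0"
    using assms(3) unfolding cell_lift_def by auto
  then show ?thesis
    using bf_e_nonzero[OF cell_lift_bf_self_neg[OF assms(3)]] by simp
qed

lemma cell_lift_bf_neg:
  assumes "x \<in> open_chambers Q L" "bf Q x e < 0" "y \<in> cell_lift Q L x" "z \<in> cell_lift Q L x"
  shows "bf Q y z < 0"
  using reverse_cauchy_schwarz[OF cell_lift_bf_self_neg[OF assms(3)] cell_lift_bf_e_neg[OF assms(1-3)]
      cell_lift_bf_self_neg[OF assms(4)] cell_lift_bf_e_neg[OF assms(1,2,4)]] .

lemma wall_points_connected:
  assumes "is_lattice L" "integral_form Q L" "v \<in> L" "bf Q v v = 2"
    and "x \<in> open_chambers Q L" "bf Q x e < 0"
    and "wall_point Q L x v q1" "wall_point Q L x v q2"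
  shows "q2 \<in> connected_component_set (open_chambers Q (orth_sublattice Q L v)) q1"
proof -
  let ?Lv = "orth_sublattice Q L v"
  have P: "q1 \<in> cell_lift Q L x" "q2 \<in> cell_lift Q L x"
    using assms(7,8) unfolding wall_point_def by auto
  have O: "q1 \<in> open_chambers Q ?Lv" "q2 \<in> open_chambers Q ?Lv"
    using wall_point_open_chambers[OF symmetric assms(1-4)] assms(7,8) by auto
  have "0 < bf Q u q1 * bf Q u q2" if "u \<in> Phi Q ?Lv" for u
  proof -
    have "bf Q u q1 \<noteq> 0" "bf Q u q2 \<noteq> 0"
      using O that unfolding open_chambers_def by auto
    moreover have "u \<in> Phi Q L"
      using that Phi_orth_sublattice_subset[OF symmetric assms(1-4)] by blast
    ultimately show ?thesis
      using cell_lift_one_side[of u Q L x] P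
      by (metis linorder_not_le mult_neg_neg mult_pos_pos order_antisym_conv)
  qed
  then have "closed_segment q1 q2 \<subseteq> open_chambers Q ?Lv"
    using closed_segment_subset_open_chambers[OF symmetric O] cell_lift_bf_neg[OF assms(5,6) P]
    by blast
  then show ?thesis
    using connected_component_maximal[OF _ connected_segment] by blast
qed

end

lemma lorentzian_form_towards:
  assumes "transpose Q = Q" "lorentzian Q UNIV" "bf Q x x < 0"
  obtains e where "lorentzian_form Q e" "bf Q x e < 0"
proof -
  obtain e where e: "bf Q e e < 0" "\<And>y. y \<noteq> 0 \<Longrightarrow> bf Q y e = 0 \<Longrightarrow> 0 < bf Q y y"
    using assms(2) unfolding lorentzian_def by auto
  then have forms: "lorentzian_form Q e" "lorentzian_form Q (- e)"
    using assms(1) by (unfold_locales; force)+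
  then have "bf Q x e \<noteq> 0"
    using lorentzian_form.bf_e_nonzero assms(3) by blast
  then show ?thesis
    using that forms by (cases "bf Q x e < 0") auto
qed

theorem lemma7p6p1:
  fixes Q :: "real^'n^'n" and L :: "(real^'n) set" and f :: "real^'n \<Rightarrow> real^'n"
    and x0 v :: "real^'n"
  assumes "good_lattice Q L"
    and "automorphism Q L f"
    and "x0 \<in> open_chambers Q L"
    and "f ` cell_of Q L x0 = cell_of Q L x0"
    and "f ` cell_lift Q L x0 = cell_lift Q L x0"
    and "v \<in> Phi_b Q L x0" and "bf Q v v = 2" and "f v = v"
    and "\<not> Z3_direct Q L f"
  shows "\<not> Z3_direct Q (orth_sublattice Q L v) f \<and>
         (\<exists>Pv. is_cell Q (orth_sublattice Q L v) Pv \<and>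
               preserves_direct Q (orth_sublattice Q L v) Pv f)"
proof -
  let ?Lv = "orth_sublattice Q L v"
  have Q: "transpose Q = Q" "is_lattice L" "integral_form Q L" "span L = UNIV" "lorentzian Q UNIV"
    using assms(1) unfolding good_lattice_def by auto
  have "v \<in> L"
    using assms(6) unfolding Phi_b_def Phi_def V_roots_def by auto
  obtain q where q: "wall_point Q L x0 v q"
    using assms(6) unfolding Phi_b_def wall_point_def by blast
  have qO: "q \<in> open_chambers Q ?Lv"
    by (rule wall_point_open_chambers[OF Q(1-3) \<open>v \<in> L\<close> assms(7) q])
  obtain g where g: "automorphism Q L g" "\<And>x. g (f x) = x" "\<And>x. f (g x) = x"
    using automorphism_inverse[OF assms(2) Q(4)] by blast
  have "g v = v"
    using g(2)[of v] assms(8) by simp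
  obtain e where e: "lorentzian_form Q e" "bf Q x0 e < 0"
    using lorentzian_form_towards[OF Q(1,5)] assms(3) unfolding open_chambers_def neg_cone_def by blast
  have "wall_point Q L x0 v (f q)"
    using wall_point_image[OF assms(2) g \<open>v \<in> L\<close> assms(8) _ q] assms(5) by simp
  then have "f q \<in> connected_component_set (open_chambers Q ?Lv) q"
    using lorentzian_form.wall_points_connected[OF e(1) Q(2,3) \<open>v \<in> L\<close> assms(7,3) e(2) q] by blast
  then have "preserves_direct Q ?Lv (cell_of Q ?Lv q) f"
    by (rule automorphism_preserves_direct[OF automorphism_orth_sublattice[OF assms(2) \<open>v \<in> L\<close> assms(8)]
          automorphism_orth_sublattice[OF g(1) \<open>v \<in> L\<close> \<open>g v = v\<close>] g(2,3) qO])
  moreover have "is_cell Q ?Lv (cell_of Q ?Lv q)"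
    unfolding is_cell_def using qO by blast
  moreover have "linear f" "f ` L \<subseteq> L"
    using assms(2) unfolding automorphism_def by auto
  then have "\<not> Z3_direct Q ?Lv f"
    using Z3_direct_of_orth_sublattice[OF Q(1-3) \<open>v \<in> L\<close> assms(7)] assms(8,9) by blast
  ultimately show ?thesis
    by blast
qed

end
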